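(* Let $G$ be a finitely presented group, $A$ an abelian group and $B$ a group with trivial center. There is a surjective homomorphism $G\times A\to B\times A$ if and only if there is a surjective homomorphism $G\to B$. *)

theory Defs
  imports "HOL-Algebra.Algebra"
begin

text \<open>Words over generators (natural numbers); a letter (x, True) denotes the
  inverse of generator x, (x, False) the generator itself.\<close>

type_synonym word = "(nat \<times> bool) list"

fun letter_eval :: "('g, 'm) monoid_scheme \<Rightarrow> (nat \<Rightarrow> 'g) \<Rightarrow> nat \<times> bool \<Rightarrow> 'g" where
  "letter_eval G f (x, b) = (if b then inv\<^bsub>G\<^esub> (f x) else f x)"

definition word_eval :: "('g, 'm) monoid_scheme \<Rightarrow> (nat \<Rightarrow> 'g) \<Rightarrow> word \<Rightarrow> 'g" where
  "word_eval G f w = foldr (\<lambda>l acc. letter_eval G f l \<otimes>\<^bsub>G\<^esub> acc) w \<one>\<^bsub>G\<^esub>"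

inductive pres_step :: "word set \<Rightarrow> word \<Rightarrow> word \<Rightarrow> bool" for R where
  cancel: "pres_step R (u @ [(x, b), (x, \<not> b)] @ v) (u @ v)"
| relator: "r \<in> R \<Longrightarrow> pres_step R (u @ r @ v) (u @ v)"

text \<open>Equality in the presented group F(X)/<<R>>: the equivalence relation
  generated by the reduction steps.\<close>

definition pres_equiv :: "word set \<Rightarrow> word \<Rightarrow> word \<Rightarrow> bool" where
  "pres_equiv R = (symclp (pres_step R))\<^sup>*\<^sup>*"

text \<open>G is finitely presented: there are finitely many generators X and
  finitely many relators R (words over X) and an assignment f of the generators
  to elements of G inducing an isomorphism F(X)/<<R>> \<cong> G, i.e. the induced map
  is surjective and a word is trivial in G iff it is trivial in F(X)/<<R>>.\<close>

definition finitely_presented :: "('g, 'm) monoid_scheme \<Rightarrow> bool" where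
  "finitely_presented G \<longleftrightarrow>
     (\<exists>(Gens :: nat set) (Rels :: word set) (f :: nat \<Rightarrow> 'g).
        finite Gens \<and> finite Rels \<and> (\<forall>r\<in>Rels. set r \<subseteq> Gens \<times> UNIV) \<and>
        f ` Gens \<subseteq> carrier G \<and>
        (\<forall>g\<in>carrier G. \<exists>w. set w \<subseteq> Gens \<times> UNIV \<and> word_eval G f w = g) \<and>
        (\<forall>w. set w \<subseteq> Gens \<times> UNIV \<longrightarrow> (word_eval G f w = \<one>\<^bsub>G\<^esub> \<longleftrightarrow> pres_equiv Rels w [])))"

definition trivial_center :: "('g, 'm) monoid_scheme \<Rightarrow> bool" where
  "trivial_center B \<longleftrightarrow>
     (\<forall>z\<in>carrier B. (\<forall>y\<in>carrier B. z \<otimes>\<^bsub>B\<^esub> y = y \<otimes>\<^bsub>B\<^esub> z) \<longrightarrow> z = \<one>\<^bsub>B\<^esub>)"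

end

theory Submission
  imports Defs
begin

(* Composing an epimorphism G \<times> A \<rightarrow> B \<times> A with the projection onto B gives an
   epimorphism p : G \<times> A \<rightarrow> B. The factor A is central in G \<times> A, so its image under
   the surjection p is central in B, hence trivial; therefore p (g, a) = p (g, 1) and
   g \<mapsto> p (g, 1) is already onto B. Conversely, f \<times> id lifts an epimorphism G \<rightarrow> B. *)

lemma epi_fst_DirProd:
  assumes "monoid H"
  shows "fst \<in> epi (G \<times>\<times> H) G"
proof -
  have "carrier H \<noteq> {}"
    using monoid.one_closed[OF assms] by blast
  then show ?thesis
    by (force simp: epi_def hom_def)
qed

lemma epi_image_central:
  assumes f: "f \<in> epi G H" and z: "z \<in> carrier G"
    and central: "\<forall>y\<in>carrier G. z \<otimes>\<^bsub>G\<^esub> y = y \<otimes>\<^bsub>G\<^esub> z"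
  shows "\<forall>y\<in>carrier H. f z \<otimes>\<^bsub>H\<^esub> y = y \<otimes>\<^bsub>H\<^esub> f z"
proof
  have f_hom: "f \<in> hom G H"
    using f by (simp add: epi_def)
  fix y assume "y \<in> carrier H"
  then obtain x where x: "x \<in> carrier G" "y = f x"
    using f by (auto simp: epi_def)
  have "f z \<otimes>\<^bsub>H\<^esub> f x = f (z \<otimes>\<^bsub>G\<^esub> x)"
    using hom_mult[OF f_hom] x z by simp
  also have "\<dots> = f (x \<otimes>\<^bsub>G\<^esub> z)"
    using central x by simp
  also have "\<dots> = f x \<otimes>\<^bsub>H\<^esub> f z"
    using hom_mult[OF f_hom] x z by simp
  finally show "f z \<otimes>\<^bsub>H\<^esub> y = y \<otimes>\<^bsub>H\<^esub> f z"
    using x by simp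
qed

lemma DirProd_right_factor_central:
  assumes "monoid G" "comm_monoid A" "a \<in> carrier A"
  shows "\<forall>y\<in>carrier (G \<times>\<times> A). (\<one>\<^bsub>G\<^esub>, a) \<otimes>\<^bsub>G \<times>\<times> A\<^esub> y = y \<otimes>\<^bsub>G \<times>\<times> A\<^esub> (\<one>\<^bsub>G\<^esub>, a)"
proof
  fix y assume "y \<in> carrier (G \<times>\<times> A)"
  then obtain g b where "y = (g, b)" "g \<in> carrier G" "b \<in> carrier A"
    by auto
  then show "(\<one>\<^bsub>G\<^esub>, a) \<otimes>\<^bsub>G \<times>\<times> A\<^esub> y = y \<otimes>\<^bsub>G \<times>\<times> A\<^esub> (\<one>\<^bsub>G\<^esub>, a)"
    using assms by (simp add: comm_monoid.m_comm)
qed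

lemma epi_DirProd_right_factor_trivial:
  assumes p: "p \<in> epi (G \<times>\<times> A) B"
    and G: "monoid G" and A: "comm_monoid A" and B: "trivial_center B" and a: "a \<in> carrier A"
  shows "p (\<one>\<^bsub>G\<^esub>, a) = \<one>\<^bsub>B\<^esub>"
proof -
  have one_a: "(\<one>\<^bsub>G\<^esub>, a) \<in> carrier (G \<times>\<times> A)"
    using G a by (simp add: monoid.one_closed)
  then have "p (\<one>\<^bsub>G\<^esub>, a) \<in> carrier B"
    using p unfolding epi_def by blast
  moreover have "\<forall>y\<in>carrier B. p (\<one>\<^bsub>G\<^esub>, a) \<otimes>\<^bsub>B\<^esub> y = y \<otimes>\<^bsub>B\<^esub> p (\<one>\<^bsub>G\<^esub>, a)"
    using epi_image_central[OF p one_a DirProd_right_factor_central[OF G A a]] .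
  ultimately show ?thesis
    using B unfolding trivial_center_def by blast
qed

lemma epi_DirProd_restrict_left:
  assumes p: "p \<in> epi (G \<times>\<times> A) B"
    and G: "monoid G" and A: "comm_monoid A" and B: "monoid B" and B_center: "trivial_center B"
  shows "(\<lambda>g. p (g, \<one>\<^bsub>A\<^esub>)) \<in> epi G B"
  unfolding epi_iff_subset
proof
  have one_A: "\<one>\<^bsub>A\<^esub> \<in> carrier A"
    using A by (simp add: comm_monoid.axioms(1) monoid.one_closed)
  have p_hom: "p \<in> hom (G \<times>\<times> A) B"
    using p by (simp add: epi_def)
  have p_mult: "p (g \<otimes>\<^bsub>G\<^esub> g', a \<otimes>\<^bsub>A\<^esub> a') = p (g, a) \<otimes>\<^bsub>B\<^esub> p (g', a')"
    if "g \<in> carrier G" "a \<in> carrier A" "g' \<in> carrier G" "a' \<in> carrier A" for g a g' a'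
    using hom_mult[OF p_hom, of "(g, a)" "(g', a')"] that by simp
  show "(\<lambda>g. p (g, \<one>\<^bsub>A\<^esub>)) \<in> hom G B"
  proof (rule homI)
    fix g assume "g \<in> carrier G"
    then show "p (g, \<one>\<^bsub>A\<^esub>) \<in> carrier B"
      using p_hom one_A by (simp add: hom_in_carrier)
  next
    fix g g' assume "g \<in> carrier G" "g' \<in> carrier G"
    then show "p (g \<otimes>\<^bsub>G\<^esub> g', \<one>\<^bsub>A\<^esub>) = p (g, \<one>\<^bsub>A\<^esub>) \<otimes>\<^bsub>B\<^esub> p (g', \<one>\<^bsub>A\<^esub>)"
      using p_mult[of g "\<one>\<^bsub>A\<^esub>" g' "\<one>\<^bsub>A\<^esub>"] one_A A by (simp add: comm_monoid.axioms(1))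
  qed
  show "carrier B \<subseteq> (\<lambda>g. p (g, \<one>\<^bsub>A\<^esub>)) ` carrier G"
  proof
    fix b assume "b \<in> carrier B"
    then have "b \<in> p ` carrier (G \<times>\<times> A)"
      using p by (simp add: epi_def)
    then obtain g a where ga: "g \<in> carrier G" "a \<in> carrier A" "b = p (g, a)"
      by auto
    have "p (g, a) = p (g \<otimes>\<^bsub>G\<^esub> \<one>\<^bsub>G\<^esub>, \<one>\<^bsub>A\<^esub> \<otimes>\<^bsub>A\<^esub> a)"
      using ga G A by (simp add: comm_monoid.axioms(1))
    also have "\<dots> = p (g, \<one>\<^bsub>A\<^esub>) \<otimes>\<^bsub>B\<^esub> \<one>\<^bsub>B\<^esub>"
      using p_mult[of g "\<one>\<^bsub>A\<^esub>" "\<one>\<^bsub>G\<^esub>" a] ga one_A G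
        epi_DirProd_right_factor_trivial[OF p G A B_center]
      by (simp add: monoid.one_closed)
    also have "\<dots> = p (g, \<one>\<^bsub>A\<^esub>)"
      using p_hom ga one_A B by (simp add: hom_in_carrier)
    finally show "b \<in> (\<lambda>g. p (g, \<one>\<^bsub>A\<^esub>)) ` carrier G"
      using ga by blast
  qed
qed

lemma epi_DirProd_id_right:
  assumes "f \<in> epi G B"
  shows "(\<lambda>(g, a). (f g, a)) \<in> epi (G \<times>\<times> A) (B \<times>\<times> A)"
  using assms unfolding epi_def hom_def by (auto simp: Pi_def image_iff) (metis image_iff)

theorem lemma7p21:
  fixes G :: "('g, 'm) monoid_scheme" and A :: "('a, 'n) monoid_scheme"
    and B :: "('b, 'k) monoid_scheme"
  assumes "group G" and "finitely_presented G"
    and "comm_group A"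
    and "group B" and "trivial_center B"
  shows "(\<exists>h. h \<in> epi (G \<times>\<times> A) (B \<times>\<times> A)) \<longleftrightarrow> (\<exists>h. h \<in> epi G B)"
proof
  have G: "monoid G" and A: "comm_monoid A" and B: "monoid B"
    using assms by (simp_all add: group.is_monoid comm_group.axioms(1))
  assume "\<exists>h. h \<in> epi (G \<times>\<times> A) (B \<times>\<times> A)"
  then obtain h where "h \<in> epi (G \<times>\<times> A) (B \<times>\<times> A)" by blast
  then have "fst \<circ> h \<in> epi (G \<times>\<times> A) B"
    using epi_compose epi_fst_DirProd A comm_monoid.axioms(1) by blast
  then have "(\<lambda>g. (fst \<circ> h) (g, \<one>\<^bsub>A\<^esub>)) \<in> epi G B"
    using epi_DirProd_restrict_left G A B \<open>trivial_center B\<close> by blast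
  then show "\<exists>f. f \<in> epi G B" by blast
next
  assume "\<exists>f. f \<in> epi G B"
  then show "\<exists>h. h \<in> epi (G \<times>\<times> A) (B \<times>\<times> A)"
    using epi_DirProd_id_right by blast
qed

end
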